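(* Let $\Sigma\subset(\mathbb{M},g_L)$ be a regular surface and $\gamma:[a,b]\to\Sigma$ a Euclidean $C^2$-smooth regular curve passing through non-characteristic points. Then: (1) if $\omega(\dot\gamma(t))\neq0$, $$k^{\infty,\nabla^{1,\alpha}}_{\gamma,\Sigma}=\frac{\left|\bar p\frac{(2-\alpha)\dot\gamma_1}{2\gamma_1}+\bar q\left(\frac{(1-\alpha)\dot\gamma_2}{\gamma_1}+\frac{\alpha\dot\gamma_3}{2}\right)\right|}{|\omega(\dot\gamma(t))|};$$ (2) if $\omega(\dot\gamma(t))=0$ and $\frac{d}{dt}\omega(\dot\gamma(t))=0$, then $k^{\infty,\nabla^{1,\alpha}}_{\gamma,\Sigma}=0$; (3) if $\omega(\dot\gamma(t))=0$ and $\frac{d}{dt}\omega(\dot\gamma(t))\neq0$, then $$\lim_{L\to+\infty}\frac{k^{L,\nabla^{1,\alpha}}_{\gamma,\Sigma}}{\sqrt L}=\frac{\left|\frac{d}{dt}\omega(\dot\gamma(t))\right|}{\left(\bar q\frac{\dot\gamma_1}{\gamma_1}-\bar p\dot\gamma_3\right)^2}.$$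
   Context: The affine group $\mathbb{M}$ is modeled on $\{(x_1,x_2,x_3)\in\mathbb{R}^3: x_1>0\}$ with product $(m,n,s)\star(\lambda,\mu,\nu)=(m\lambda,m\mu+n,\nu+s)$. Put $X_1=x_1\partial_{x_1}$, $X_2=x_1\partial_{x_2}+\partial_{x_3}$, $X_3=x_1\partial_{x_2}$, with dual coframe $\omega_1=\frac1{x_1}dx_1$, $\omega_2=dx_3$, $\omega=\frac1{x_1}dx_2-dx_3$. For a constant $L>0$, $g_L=\omega_1\otimes\omega_1+\omega_2\otimes\omega_2+L\,\omega\otimes\omega$, so $X_1,X_2,\widetilde X_3:=L^{-1/2}X_3$ is $g_L$-orthonormal; $\langle\cdot,\cdot\rangle_L$ and $\|\cdot\|_L$ denote $g_L$ and its norm, and $\nabla$ is the Levi-Civita connection of $g_L$. Let $H_1=\mathrm{span}\{X_1,X_2\}$, and let $P^1$, $P^{1,\perp}$ be the $g_L$-orthogonal projections onto $H_1$ and onto $H_1^\perp=\mathrm{span}\{X_3\}$. For a real constant $\alpha$, the first kind of deformed Schouten–Van Kampen connection is $\nabla^{1,\alpha}_XY=(1-\alpha)\nabla_XY+\alpha P^1\nabla_X(P^1Y)+\alpha P^{1,\perp}\nabla_X(P^{1,\perp}Y)$. For a curve $\gamma=(\gamma_1,\gamma_2,\gamma_3)$, $\omega(\dot\gamma(t))=\frac{\dot\gamma_2}{\gamma_1}-\dot\gamma_3$. A regular surface is a Euclidean $C^2$-smooth compact oriented surface $\Sigma=\{u=0\}$ with $u$ Euclidean $C^2$ and with nonvanishing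 Euclidean gradient. Set $\nabla_Hu=X_1(u)X_1+X_2(u)X_2$; a point of $\Sigma$ is characteristic if $\nabla_Hu=0$. Put $p=X_1u$, $q=X_2u$, $r=\widetilde X_3u$, $l=\sqrt{p^2+q^2}$, $l_L=\sqrt{p^2+q^2+r^2}$, $\bar p=p/l$, $\bar q=q/l$, $\bar p_L=p/l_L$, $\bar q_L=q/l_L$, $\bar r_L=r/l_L$. At non-characteristic points, $e_1=\bar qX_1-\bar pX_2$ and $e_2=\bar r_L\bar pX_1+\bar r_L\bar qX_2-\frac{l}{l_L}\widetilde X_3$ form a $g_L$-orthonormal frame of $T\Sigma$. For $U,V$ tangent to $\Sigma$, $\nabla^{\Sigma,1,\alpha}_UV$ is the $g_L$-orthogonal projection onto $T\Sigma$ of $\nabla^{1,\alpha}_UV$. The geodesic curvature is $k^{L,\nabla^{1,\alpha}}_{\gamma,\Sigma}=\sqrt{\frac{\|\nabla^{\Sigma,1,\alpha}_{\dot\gamma}\dot\gamma\|_L^2}{\|\dot\gamma\|_L^4}-\frac{\langle\nabla^{\Sigma,1,\alpha}_{\dot\gamma}\dot\gamma,\dot\gamma\rangle_L^2}{\|\dot\gamma\|_L^6}}$ and $k^{\infty,\nabla^{1,\alpha}}_{\gamma,\Sigma}:=\lim_{L\to+\infty}k^{L,\nabla^{1,\alpha}}_{\gamma,\Sigma}$ when it exists. *)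

theory Defs
  imports "HOL-Analysis.Analysis"
begin

text \<open>Points of the affine group M are modelled as vectors x in real^3 (with x$1 > 0);
  tangent vectors are written in the coordinate basis d/dx1, d/dx2, d/dx3.\<close>

definition X1f :: "real^3 \<Rightarrow> real^3" where
  "X1f x = vector [x$1, 0, 0]"

definition X2f :: "real^3 \<Rightarrow> real^3" where
  "X2f x = vector [0, x$1, 1]"

definition X3f :: "real^3 \<Rightarrow> real^3" where
  "X3f x = vector [0, x$1, 0]"

definition X3t :: "real \<Rightarrow> real^3 \<Rightarrow> real^3" where
  "X3t L x = (1 / sqrt L) *\<^sub>R X3f x"

definition omega1 :: "real^3 \<Rightarrow> real^3 \<Rightarrow> real" where
  "omega1 x v = v$1 / x$1"

definition omega2 :: "real^3 \<Rightarrow> real^3 \<Rightarrow> real" where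
  "omega2 x v = v$3"

definition omegaf :: "real^3 \<Rightarrow> real^3 \<Rightarrow> real" where
  "omegaf x v = v$2 / x$1 - v$3"

definition ginner :: "real \<Rightarrow> real^3 \<Rightarrow> real^3 \<Rightarrow> real^3 \<Rightarrow> real" where
  "ginner L x v w = omega1 x v * omega1 x w + omega2 x v * omega2 x w
                    + L * omegaf x v * omegaf x w"

definition gnorm :: "real \<Rightarrow> real^3 \<Rightarrow> real^3 \<Rightarrow> real" where
  "gnorm L x v = sqrt (ginner L x v v)"

definition gmat :: "real \<Rightarrow> real^3 \<Rightarrow> real^3^3" where
  "gmat L x = (\<chi> i j. ginner L x (axis i 1) (axis j 1))"

definition dg :: "real \<Rightarrow> real^3 \<Rightarrow> 3 \<Rightarrow> 3 \<Rightarrow> 3 \<Rightarrow> real" where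
  "dg L x i j l = deriv (\<lambda>s. gmat L (x + s *\<^sub>R axis i 1) $ j $ l) 0"

definition christ :: "real \<Rightarrow> real^3 \<Rightarrow> 3 \<Rightarrow> 3 \<Rightarrow> 3 \<Rightarrow> real" where
  "christ L x k i j = (1/2) * (\<Sum>l\<in>UNIV. matrix_inv (gmat L x) $ k $ l
       * (dg L x i j l + dg L x j i l - dg L x l i j))"

definition covd :: "real \<Rightarrow> (real \<Rightarrow> real^3) \<Rightarrow> (real \<Rightarrow> real^3)
                    \<Rightarrow> (real \<Rightarrow> real^3) \<Rightarrow> real \<Rightarrow> real^3" where
  "covd L \<gamma> \<gamma>' V t = vector_derivative V (at t)
     + (\<chi> k. \<Sum>i\<in>UNIV. \<Sum>j\<in>UNIV. christ L (\<gamma> t) k i j * \<gamma>' t $ i * V t $ j)"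

text \<open>g_L-orthogonal projections onto H1 = span{X1,X2} and onto span{X3}
  (via the g_L-orthonormal frame X1, X2, X3/sqrt L).\<close>
definition P1 :: "real \<Rightarrow> real^3 \<Rightarrow> real^3 \<Rightarrow> real^3" where
  "P1 L x v = ginner L x v (X1f x) *\<^sub>R X1f x + ginner L x v (X2f x) *\<^sub>R X2f x"

definition P1perp :: "real \<Rightarrow> real^3 \<Rightarrow> real^3 \<Rightarrow> real^3" where
  "P1perp L x v = ginner L x v (X3t L x) *\<^sub>R X3t L x"

definition nabla1a :: "real \<Rightarrow> real \<Rightarrow> (real \<Rightarrow> real^3) \<Rightarrow> (real \<Rightarrow> real^3) \<Rightarrow> real \<Rightarrow> real^3" where
  "nabla1a L \<alpha> \<gamma> \<gamma>' t =
     (1 - \<alpha>) *\<^sub>R covd L \<gamma> \<gamma>' \<gamma>' t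
     + \<alpha> *\<^sub>R P1 L (\<gamma> t) (covd L \<gamma> \<gamma>' (\<lambda>s. P1 L (\<gamma> s) (\<gamma>' s)) t)
     + \<alpha> *\<^sub>R P1perp L (\<gamma> t) (covd L \<gamma> \<gamma>' (\<lambda>s. P1perp L (\<gamma> s) (\<gamma>' s)) t)"

text \<open>Euclidean gradient of u, its g_L-gradient, and the g_L-orthogonal projection
  onto the tangent plane ker(du) of the level surface.\<close>
definition egrad :: "(real^3 \<Rightarrow> real) \<Rightarrow> real^3 \<Rightarrow> real^3" where
  "egrad u x = (\<chi> i. frechet_derivative u (at x) (axis i 1))"

definition ggrad :: "real \<Rightarrow> (real^3 \<Rightarrow> real) \<Rightarrow> real^3 \<Rightarrow> real^3" where
  "ggrad L u x = matrix_inv (gmat L x) *v egrad u x"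

definition projT :: "real \<Rightarrow> (real^3 \<Rightarrow> real) \<Rightarrow> real^3 \<Rightarrow> real^3 \<Rightarrow> real^3" where
  "projT L u x v = v - ((egrad u x \<bullet> v) / (egrad u x \<bullet> ggrad L u x)) *\<^sub>R ggrad L u x"

definition kgeo :: "real \<Rightarrow> real \<Rightarrow> (real^3 \<Rightarrow> real) \<Rightarrow> (real \<Rightarrow> real^3) \<Rightarrow> (real \<Rightarrow> real^3) \<Rightarrow> real \<Rightarrow> real" where
  "kgeo L \<alpha> u \<gamma> \<gamma>' t =
     (let x = \<gamma> t; v = \<gamma>' t; D = projT L u x (nabla1a L \<alpha> \<gamma> \<gamma>' t) in
      sqrt ((gnorm L x D)^2 / (gnorm L x v)^4 - (ginner L x D v)^2 / (gnorm L x v)^6))"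

definition Xu :: "(real^3 \<Rightarrow> real^3) \<Rightarrow> (real^3 \<Rightarrow> real) \<Rightarrow> real^3 \<Rightarrow> real" where
  "Xu X u x = frechet_derivative u (at x) (X x)"

definition pbar :: "(real^3 \<Rightarrow> real) \<Rightarrow> real^3 \<Rightarrow> real" where
  "pbar u x = Xu X1f u x / sqrt ((Xu X1f u x)^2 + (Xu X2f u x)^2)"

definition qbar :: "(real^3 \<Rightarrow> real) \<Rightarrow> real^3 \<Rightarrow> real" where
  "qbar u x = Xu X2f u x / sqrt ((Xu X1f u x)^2 + (Xu X2f u x)^2)"

end

(*
  In coordinates with respect to the g_L-orthonormal frame X1, X2, X3/sqrt L the metric becomes
  Euclidean, the projection onto the tangent plane of Sigma becomes the Euclidean projection
  orthogonal to the coordinate vector m of the g_L-gradient of u, and the geodesic curvature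
  becomes |a . (b x m)| / (|m| |b|^3), where a and b are the coordinates of the connection term
  and of the velocity. Computing the Christoffel symbols of g_L shows that sqrt L (a . (b x m))
  is a quadratic polynomial c2 L^2 + c1 L + c0, so that
    k^L = sqrt ((c2 L^2 + c1 L + c0)^2 / ((M L + C) (B + W L)^3)),
  with M = p^2 + q^2 > 0, B the squared horizontal speed and W = omega(gamma')^2. If W > 0 this
  converges. If W = 0 then c2 = 0 and c1 is d/dt omega(gamma') times a factor whose square is
  M B by tangency, which gives the other two cases.
*)

theory Submission
  imports Defs "HOL-Real_Asymp.Real_Asymp"
begin

unbundle cross3_syntax

section \<open>Christoffel symbols of g_L\<close>

definition kron :: "3 \<Rightarrow> 3 \<Rightarrow> real" where
  "kron j k = (if j = k then 1 else 0)"

lemma kron_simps [simp]: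
  "kron 1 1 = 1" "kron 2 2 = 1" "kron 3 3 = 1"
  "kron 1 2 = 0" "kron 1 3 = 0" "kron 2 1 = 0" "kron 2 3 = 0" "kron 3 1 = 0" "kron 3 2 = 0"
  by (simp_all add: kron_def)

lemma kron_sym: "kron j k = kron k j"
  by (auto simp: kron_def)

lemma axis_nth_kron: "axis j (1::real) $ k = kron k j"
  by (simp add: axis_def kron_def)

lemma gmat_nth:
  "gmat L x $ j $ l = (kron j 1 * kron l 1 + L * kron j 2 * kron l 2) / (x$1)^2
     - L * (kron j 2 * kron l 3 + kron j 3 * kron l 2) / x$1 + (1 + L) * kron j 3 * kron l 3"
  using exhaust_3[of j] exhaust_3[of l]
  by (elim disjE) (simp_all add: gmat_def ginner_def omega1_def omega2_def omegaf_def axis_nth_kron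
      field_simps power2_eq_square)

lemma dg_eq:
  assumes "x$1 > 0"
  shows "dg L x i j l = kron i 1 * (- 2 * (kron j 1 * kron l 1 + L * kron j 2 * kron l 2) / (x$1)^3
                         + L * (kron j 2 * kron l 3 + kron j 3 * kron l 2) / (x$1)^2)"
proof -
  define A where "A = kron j 1 * kron l 1 + L * kron j 2 * kron l 2"
  define B where "B = L * (kron j 2 * kron l 3 + kron j 3 * kron l 2)"
  define C where "C = (1 + L) * kron j 3 * kron l 3"
  define d where "d = kron 1 i"
  have gmat_line: "(\<lambda>s. gmat L (x + s *\<^sub>R axis i 1) $ j $ l) = (\<lambda>s. A / (x$1 + s*d)^2 - B / (x$1 + s*d) + C)"
    by (rule ext) (simp add: gmat_nth A_def B_def C_def d_def axis_nth_kron mult.commute)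
  have "((\<lambda>s. A / (x$1 + s*d)^2 - B / (x$1 + s*d) + C) has_real_derivative
          - 2 * A * d / (x$1)^3 + B * d / (x$1)^2) (at 0)"
    using assms by (auto intro!: derivative_eq_intros simp: field_simps power2_eq_square power3_eq_cube)
  then have "dg L x i j l = - 2 * A * d / (x$1)^3 + B * d / (x$1)^2"
    unfolding dg_def gmat_line by (rule DERIV_imp_deriv)
  then show ?thesis
    by (simp add: A_def B_def d_def field_simps kron_sym)
qed

definition gmat_inv :: "real \<Rightarrow> real \<Rightarrow> real^3^3" where
  "gmat_inv L x1 = (\<chi> k l. kron k 1 * kron l 1 * x1^2 + kron k 2 * kron l 2 * x1^2 * (1 + L) / L
                          + (kron k 2 * kron l 3 + kron k 3 * kron l 2) * x1 + kron k 3 * kron l 3)"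

lemma matrix_inv_unique:
  fixes A B :: "'a::field^'n^'n"
  assumes "A ** B = mat 1" "B ** A = mat 1"
  shows "matrix_inv A = B"
proof -
  have "\<exists>A'. A ** A' = mat 1 \<and> A' ** A = mat 1"
    using assms by blast
  then have C: "A ** matrix_inv A = mat 1" "matrix_inv A ** A = mat 1"
    unfolding matrix_inv_def by (metis (mono_tags, lifting) someI_ex)+
  have "matrix_inv A = matrix_inv A ** (A ** B)"
    using assms by simp
  also have "\<dots> = B"
    using C by (simp add: matrix_mul_assoc)
  finally show ?thesis .
qed

lemma matrix_inv_gmat:
  assumes "x$1 > 0" "L > 0"
  shows "matrix_inv (gmat L x) = gmat_inv L (x$1)"
  using assms
  by (intro matrix_inv_unique)
     (simp_all add: vec_eq_iff forall_3 matrix_matrix_mult_def sum_3 mat_def gmat_inv_def gmat_nth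
        field_simps power2_eq_square)

lemma christ_eq:
  assumes "x$1 > 0" "L > 0"
  shows "christ L x k i j =
      kron k 1 * (- kron i 1 * kron j 1 / x$1 + L * kron i 2 * kron j 2 / x$1
                  - L / 2 * (kron i 2 * kron j 3 + kron i 3 * kron j 2))
    + kron k 2 * (- (2 + L) / (2 * x$1) * (kron i 1 * kron j 2 + kron i 2 * kron j 1)
                  + (1 + L) / 2 * (kron i 1 * kron j 3 + kron i 3 * kron j 1))
    + kron k 3 * (- L / (2 * (x$1)^2) * (kron i 1 * kron j 2 + kron i 2 * kron j 1)
                  + L / (2 * x$1) * (kron i 1 * kron j 3 + kron i 3 * kron j 1))"
  using exhaust_3[of k] exhaust_3[of i] exhaust_3[of j] assms
  by (elim disjE) (simp_all add: christ_def matrix_inv_gmat dg_eq gmat_inv_def sum_3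
      field_simps power2_eq_square power3_eq_cube)

lemma covd_eq:
  assumes "\<gamma> t $ 1 > 0" "L > 0" "(V has_vector_derivative V') (at t)"
  shows "covd L \<gamma> \<gamma>' V t = V' + vector [
     - V t$1 * \<gamma>' t$1 / \<gamma> t$1 + (L / \<gamma> t$1) * \<gamma>' t$2 * V t$2 - (L/2) * (\<gamma>' t$2 * V t$3 + \<gamma>' t$3 * V t$2),
     - (2 + L) / (2 * \<gamma> t$1) * (\<gamma>' t$1 * V t$2 + \<gamma>' t$2 * V t$1) + (1 + L)/2 * (\<gamma>' t$1 * V t$3 + \<gamma>' t$3 * V t$1),
     - L / (2 * (\<gamma> t$1)^2) * (\<gamma>' t$1 * V t$2 + \<gamma>' t$2 * V t$1) + L / (2 * \<gamma> t$1) * (\<gamma>' t$1 * V t$3 + \<gamma>' t$3 * V t$1)]"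
  using assms
  by (simp add: covd_def vector_derivative_at vec_eq_iff forall_3 sum_3 christ_eq field_simps)

section \<open>Orthonormal frame coordinates\<close>

lemma sqrt_mult_sqrt_mult: "0 \<le> L \<Longrightarrow> sqrt L * (sqrt L * z) = L * z"
  by (simp add: mult.assoc[symmetric])

text \<open>Coordinates (omega1, omega2, sqrt L omega) with respect to the g_L-orthonormal frame
  X1, X2, X3/sqrt L.\<close>

definition frame_coords :: "real \<Rightarrow> real^3 \<Rightarrow> real^3 \<Rightarrow> real^3" where
  "frame_coords L x y = vector [y$1 / x$1, y$3, sqrt L * omegaf x y]"

lemma ginner_frame_coords:
  "0 \<le> L \<Longrightarrow> ginner L x y z = frame_coords L x y \<bullet> frame_coords L x z"
  by (simp add: ginner_def frame_coords_def omega1_def omega2_def inner_vec_def sum_3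
      algebra_simps sqrt_mult_sqrt_mult)

lemma frame_coords_diff_scaleR:
  "frame_coords L x (y - c *\<^sub>R z) = frame_coords L x y - c *\<^sub>R frame_coords L x z"
  by (simp add: frame_coords_def omegaf_def vec_eq_iff forall_3 algebra_simps diff_divide_distrib)

lemma frame_coords_eq_0_iff:
  assumes "x$1 \<noteq> 0" "L > 0"
  shows "frame_coords L x y = 0 \<longleftrightarrow> y = 0"
  using assms by (auto simp: frame_coords_def omegaf_def vec_eq_iff forall_3)

lemma ginner_ggrad:
  assumes "x$1 > 0" "L > 0"
  shows "ginner L x (ggrad L u x) y = egrad u x \<bullet> y"
  using assms
  by (simp add: ggrad_def matrix_inv_gmat gmat_inv_def matrix_vector_mult_def sum_3 ginner_def
      omega1_def omega2_def omegaf_def inner_vec_def field_simps power2_eq_square)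

lemma frame_coords_ggrad:
  assumes "x$1 > 0" "L > 0"
  shows "frame_coords L x (ggrad L u x) =
    vector [x$1 * egrad u x $ 1, x$1 * egrad u x $ 2 + egrad u x $ 3, x$1 * egrad u x $ 2 / sqrt L]"
  using assms
  by (simp add: ggrad_def matrix_inv_gmat gmat_inv_def matrix_vector_mult_def sum_3 frame_coords_def
      omegaf_def vec_eq_iff forall_3 field_simps power2_eq_square real_sqrt_divide)

lemma has_derivative_eq_egrad_inner:
  assumes "(u has_derivative D) (at x)"
  shows "D y = egrad u x \<bullet> y"
proof -
  have lin: "linear D"
    using assms by (rule has_derivative_linear)
  have "D y = D (\<Sum>i\<in>UNIV. y$i *\<^sub>R axis i 1)"
    using basis_expansion[of y] by (simp add: scalar_mult_eq_scaleR)
  also have "\<dots> = (\<Sum>i\<in>UNIV. y$i * D (axis i 1))"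
    by (simp add: linear_sum[OF lin] linear_scale[OF lin])
  also have "\<dots> = egrad u x \<bullet> y"
    using frechet_derivative_at[OF assms] by (simp add: egrad_def inner_vec_def mult.commute)
  finally show ?thesis .
qed

lemma Xu_egrad:
  assumes "u differentiable (at x)"
  shows "Xu X1f u x = x$1 * egrad u x $ 1" "Xu X2f u x = x$1 * egrad u x $ 2 + egrad u x $ 3"
    "Xu X3f u x = x$1 * egrad u x $ 2"
  using has_derivative_eq_egrad_inner[OF frechet_derivative_works[THEN iffD1, OF assms]]
  by (simp_all add: Xu_def X1f_def X2f_def X3f_def inner_vec_def sum_3)

lemma egrad_inner_eq_Xu:
  assumes "u differentiable (at x)" "x$1 \<noteq> 0"
  shows "egrad u x \<bullet> v = Xu X1f u x * (v$1 / x$1) + Xu X2f u x * v$3 + Xu X3f u x * omegaf x v"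
  using assms by (simp add: Xu_egrad inner_vec_def sum_3 omegaf_def field_simps)

lemma derivative_along_level_curve:
  assumes hg: "(\<gamma> has_vector_derivative v) (at t)" and du: "(u has_derivative D) (at (\<gamma> t))"
    and level: "\<forall>s\<in>{a..b}. u (\<gamma> s) = 0" and ab: "a < b" and t: "t \<in> {a..b}"
  shows "D v = 0"
proof -
  have "((\<lambda>s. u (\<gamma> s)) has_derivative (\<lambda>h. D (h *\<^sub>R v))) (at t)"
    using diff_chain_at[OF hg[unfolded has_vector_derivative_def] du] by (simp add: o_def)
  moreover have "(\<lambda>h. D (h *\<^sub>R v)) = (\<lambda>h. h *\<^sub>R D v)"
    using has_derivative_linear[OF du] by (simp add: linear_scale)
  ultimately have "((\<lambda>s. u (\<gamma> s)) has_vector_derivative D v) (at t within {a..b})"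
    unfolding has_vector_derivative_def by (simp add: has_derivative_at_withinI)
  moreover have "((\<lambda>s. u (\<gamma> s)) has_vector_derivative 0) (at t within {a..b})"
    by (rule has_vector_derivative_transform[OF t _ has_vector_derivative_const]) (use level in auto)
  moreover have "at t within {a..b} \<noteq> bot"
    using t ab by (simp add: trivial_limit_within)
  ultimately show ?thesis
    using vector_derivative_unique_within by blast
qed

lemma cross_cross_left: "(x \<times> y) \<times> z = (x \<bullet> z) *\<^sub>R y - (y \<bullet> z) *\<^sub>R x"
  by (simp add: cross3_def inner_vec_def sum_3 vec_eq_iff forall_3 algebra_simps)

lemma dot_cross_rotate: "(x \<times> y) \<bullet> z = x \<bullet> (y \<times> z)"
  by (simp add: cross3_simps)

lemma curvature_of_orthogonal_projection:
  fixes a b m :: "real^3"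
  assumes bm: "b \<bullet> m = 0" and m: "m \<noteq> 0" and b: "b \<noteq> 0"
  defines "d \<equiv> a - ((a \<bullet> m) / (m \<bullet> m)) *\<^sub>R m"
  shows "(d \<bullet> d) / (b \<bullet> b)^2 - (d \<bullet> b)^2 / (b \<bullet> b)^3 = (a \<bullet> (b \<times> m))^2 / ((m \<bullet> m) * (b \<bullet> b)^3)"
proof -
  txt \<open>Lagrange's identity, and d and b both lie in the plane orthogonal to m, so d x b is parallel to m.\<close>
  have dm: "d \<bullet> m = 0"
    using m by (simp add: d_def inner_diff_left)
  have lagrange: "(d \<bullet> d) * (b \<bullet> b) - (d \<bullet> b)^2 = (d \<times> b) \<bullet> (d \<times> b)"
    using norm_cross_dot[of d b] by (simp add: power_mult_distrib power2_norm_eq_inner)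
  have "(d \<times> b) \<times> m = 0"
    using dm bm by (simp add: cross_cross_left inner_commute)
  then have parallel: "((d \<times> b) \<bullet> (d \<times> b)) * (m \<bullet> m) = ((d \<times> b) \<bullet> m)^2"
    using norm_cross_dot[of "d \<times> b" m] by (simp add: power_mult_distrib power2_norm_eq_inner)
  have triple: "(d \<times> b) \<bullet> m = a \<bullet> (b \<times> m)"
    by (simp add: dot_cross_rotate d_def inner_diff_left dot_cross_self)
  have "(d \<bullet> d) / (b \<bullet> b)^2 - (d \<bullet> b)^2 / (b \<bullet> b)^3 = ((d \<bullet> d) * (b \<bullet> b) - (d \<bullet> b)^2) / (b \<bullet> b)^3"
    using b by (simp add: field_simps power2_eq_square power3_eq_cube)
  also have "\<dots> = ((d \<times> b) \<bullet> (d \<times> b)) * (m \<bullet> m) / ((m \<bullet> m) * (b \<bullet> b)^3)"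
    using m by (simp add: lagrange)
  finally show ?thesis
    by (simp only: parallel triple)
qed

lemma sqrt_power4: "0 \<le> z \<Longrightarrow> sqrt z ^ 4 = z^2"
  and sqrt_power6: "0 \<le> z \<Longrightarrow> sqrt z ^ 6 = z^3"
proof -
  have "sqrt z ^ 4 = (sqrt z ^ 2)^2" "sqrt z ^ 6 = (sqrt z ^ 2)^3"
    by (simp_all flip: power_mult)
  then show "0 \<le> z \<Longrightarrow> sqrt z ^ 4 = z^2" "0 \<le> z \<Longrightarrow> sqrt z ^ 6 = z^3"
    by simp_all
qed

lemma kgeo_eq_triple_product:
  fixes \<alpha> :: real
  assumes x1: "\<gamma> t $ 1 > 0" and L: "L > 0"
    and tangent: "egrad u (\<gamma> t) \<bullet> \<gamma>' t = 0"
    and grad_nz: "egrad u (\<gamma> t) \<noteq> 0" and regular: "\<gamma>' t \<noteq> 0"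
  defines "a \<equiv> frame_coords L (\<gamma> t) (nabla1a L \<alpha> \<gamma> \<gamma>' t)"
    and "b \<equiv> frame_coords L (\<gamma> t) (\<gamma>' t)"
    and "m \<equiv> frame_coords L (\<gamma> t) (ggrad L u (\<gamma> t))"
  shows "kgeo L \<alpha> u \<gamma> \<gamma>' t = sqrt ((a \<bullet> (b \<times> m))^2 / ((m \<bullet> m) * (b \<bullet> b)^3))"
proof -
  define x where "x = \<gamma> t"
  define N where "N = nabla1a L \<alpha> \<gamma> \<gamma>' t"
  define D where "D = projT L u x N"
  have g: "ginner L x y z = frame_coords L x y \<bullet> frame_coords L x z" for y z
    using L by (simp add: ginner_frame_coords)
  have grad: "egrad u x \<bullet> y = m \<bullet> frame_coords L x y" for y
    using ginner_ggrad[of x L u y] x1 L g by (simp add: x_def m_def)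
  have D: "frame_coords L x D = a - ((a \<bullet> m) / (m \<bullet> m)) *\<^sub>R m"
    using grad[of N] grad[of "ggrad L u x"]
    by (simp add: D_def projT_def frame_coords_diff_scaleR a_def m_def x_def N_def inner_commute)
  have bm: "b \<bullet> m = 0"
    using grad[of "\<gamma>' t"] tangent by (simp add: b_def x_def inner_commute)
  have m0: "m \<noteq> 0"
    using grad[of "egrad u x"] grad_nz by (auto simp: x_def)
  have b0: "b \<noteq> 0"
    using regular frame_coords_eq_0_iff[of x L] x1 L by (simp add: b_def x_def)
  have "kgeo L \<alpha> u \<gamma> \<gamma>' t = sqrt ((gnorm L x D)^2 / (gnorm L x (\<gamma>' t))^4
                                  - (ginner L x D (\<gamma>' t))^2 / (gnorm L x (\<gamma>' t))^6)"
    by (simp add: kgeo_def Let_def x_def D_def N_def)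
  also have "\<dots> = sqrt ((frame_coords L x D \<bullet> frame_coords L x D) / (b \<bullet> b)^2
                   - (frame_coords L x D \<bullet> b)^2 / (b \<bullet> b)^3)"
    unfolding gnorm_def g by (simp add: sqrt_power4 sqrt_power6 b_def x_def)
  finally show ?thesis
    unfolding D curvature_of_orthogonal_projection[OF bm m0 b0] .
qed

section \<open>The curvature as a function of L\<close>

lemma has_real_derivative_vec_nth:
  "(f has_vector_derivative f') F \<Longrightarrow> ((\<lambda>s. f s $ i) has_real_derivative f' $ i) F"
  using bounded_linear.has_vector_derivative[OF bounded_linear_vec_nth, of f f' F i]
  by (simp add: has_real_derivative_iff_has_vector_derivative)

lemma has_vector_derivative_vector3:
  assumes "(f1 has_real_derivative d1) (at t)" "(f2 has_real_derivative d2) (at t)"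
    "(f3 has_real_derivative d3) (at t)"
  shows "((\<lambda>s. vector [f1 s, f2 s, f3 s] :: real^3) has_vector_derivative vector [d1, d2, d3]) (at t)"
proof -
  have vector3: "(vector [a, b, c] :: real^3) = a *\<^sub>R axis 1 1 + b *\<^sub>R axis 2 1 + c *\<^sub>R axis 3 1" for a b c
    by (simp add: vec_eq_iff forall_3 axis_nth_kron)
  show ?thesis
    unfolding vector3 by (rule derivative_eq_intros assms has_vector_derivative_const refl | simp)+
qed

lemma P1_eq: "x$1 \<noteq> 0 \<Longrightarrow> P1 L x y = vector [y$1, x$1 * y$3, y$3]"
  by (simp add: P1_def ginner_def X1f_def X2f_def omega1_def omega2_def omegaf_def vec_eq_iff forall_3)

lemma P1perp_eq: "x$1 \<noteq> 0 \<Longrightarrow> L > 0 \<Longrightarrow> P1perp L x y = vector [0, y$2 - x$1 * y$3, 0]"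
  by (simp add: P1perp_def X3t_def X3f_def ginner_def omega1_def omega2_def omegaf_def vec_eq_iff forall_3
      field_simps sqrt_mult_sqrt_mult)

lemma has_vector_derivative_projections_curve:
  assumes x1: "\<gamma> t $ 1 > 0"
    and hg: "(\<gamma> has_vector_derivative \<gamma>' t) (at t)" and hv: "(\<gamma>' has_vector_derivative w) (at t)"
  shows "((\<lambda>s. P1 L (\<gamma> s) (\<gamma>' s)) has_vector_derivative
           vector [w$1, \<gamma>' t$1 * \<gamma>' t$3 + \<gamma> t$1 * w$3, w$3]) (at t)"
    and "L > 0 \<Longrightarrow> ((\<lambda>s. P1perp L (\<gamma> s) (\<gamma>' s)) has_vector_derivative
           vector [0, w$2 - \<gamma>' t$1 * \<gamma>' t$3 - \<gamma> t$1 * w$3, 0]) (at t)"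
proof -
  have "((\<lambda>s. \<gamma> s $ 1) \<longlongrightarrow> \<gamma> t $ 1) (at t)"
    using DERIV_isCont[OF has_real_derivative_vec_nth[OF hg, of 1]] unfolding isCont_def .
  then have near: "\<forall>\<^sub>F s in at t. \<gamma> s $ 1 > 0"
    using x1 by (rule order_tendstoD(1))
  have d13: "((\<lambda>s. \<gamma> s $ 1 * \<gamma>' s $ 3) has_real_derivative \<gamma>' t$1 * \<gamma>' t$3 + \<gamma> t$1 * w$3) (at t)"
    using DERIV_mult[OF has_real_derivative_vec_nth[OF hg, of 1] has_real_derivative_vec_nth[OF hv, of 3]]
    by (simp add: mult.commute)
  have "((\<lambda>s. vector [\<gamma>' s$1, \<gamma> s$1 * \<gamma>' s$3, \<gamma>' s$3] :: real^3) has_vector_derivative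
          vector [w$1, \<gamma>' t$1 * \<gamma>' t$3 + \<gamma> t$1 * w$3, w$3]) (at t)"
    by (intro has_vector_derivative_vector3 has_real_derivative_vec_nth[OF hv] d13)
  then show "((\<lambda>s. P1 L (\<gamma> s) (\<gamma>' s)) has_vector_derivative
           vector [w$1, \<gamma>' t$1 * \<gamma>' t$3 + \<gamma> t$1 * w$3, w$3]) (at t)"
    unfolding has_vector_derivative_def
    by (rule has_derivative_transform_eventually) (use near x1 in \<open>auto simp: P1_eq elim: eventually_mono\<close>)
  assume L: "L > 0"
  have "((\<lambda>s. \<gamma>' s$2 - \<gamma> s$1 * \<gamma>' s$3) has_real_derivative w$2 - \<gamma>' t$1 * \<gamma>' t$3 - \<gamma> t$1 * w$3) (at t)"
    using DERIV_diff[OF has_real_derivative_vec_nth[OF hv, of 2] d13] by (simp add: algebra_simps)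
  then have "((\<lambda>s. vector [0, \<gamma>' s$2 - \<gamma> s$1 * \<gamma>' s$3, 0] :: real^3) has_vector_derivative
          vector [0, w$2 - \<gamma>' t$1 * \<gamma>' t$3 - \<gamma> t$1 * w$3, 0]) (at t)"
    by (intro has_vector_derivative_vector3 DERIV_const)
  then show "((\<lambda>s. P1perp L (\<gamma> s) (\<gamma>' s)) has_vector_derivative
           vector [0, w$2 - \<gamma>' t$1 * \<gamma>' t$3 - \<gamma> t$1 * w$3, 0]) (at t)"
    unfolding has_vector_derivative_def
    by (rule has_derivative_transform_eventually) (use near x1 L in \<open>auto simp: P1perp_eq elim: eventually_mono\<close>)
qed

definition omegaf_rate :: "real^3 \<Rightarrow> real^3 \<Rightarrow> real^3 \<Rightarrow> real" where
  "omegaf_rate x v w = w$2 / x$1 - v$2 * v$1 / (x$1)^2 - w$3"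

lemma has_real_derivative_omegaf_curve:
  assumes "\<gamma> t $ 1 > 0"
    and hg: "(\<gamma> has_vector_derivative \<gamma>' t) (at t)" and hv: "(\<gamma>' has_vector_derivative w) (at t)"
  shows "((\<lambda>s. omegaf (\<gamma> s) (\<gamma>' s)) has_real_derivative omegaf_rate (\<gamma> t) (\<gamma>' t) w) (at t)"
  unfolding omegaf_def omegaf_rate_def
  using has_real_derivative_vec_nth[OF hg, of 1] has_real_derivative_vec_nth[OF hv, of 2]
    has_real_derivative_vec_nth[OF hv, of 3] assms(1)
  by (auto intro!: derivative_eq_intros simp: field_simps power2_eq_square)

lemma frame_coords_nabla1a:
  assumes x1: "\<gamma> t $ 1 > 0" and L: "L > 0"
    and hg: "(\<gamma> has_vector_derivative \<gamma>' t) (at t)" and hv: "(\<gamma>' has_vector_derivative w) (at t)"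
  defines "x \<equiv> \<gamma> t" and "v \<equiv> \<gamma>' t"
  shows "frame_coords L x (nabla1a L \<alpha> \<gamma> \<gamma>' t) = vector [
      w$1 / x$1 - (v$1 / x$1)^2 + (1 - \<alpha>/2) * L * v$3 * omegaf x v + (1 - \<alpha>) * L * (omegaf x v)^2,
      w$3 - (1 - \<alpha>/2) * L * (v$1 / x$1) * omegaf x v,
      sqrt L * (omegaf_rate x v w - (1 - \<alpha>) * (v$1 / x$1) * omegaf x v)]"
proof -
  have x0: "x$1 \<noteq> 0"
    using x1 by (simp add: x_def)
  note P = has_vector_derivative_projections_curve[OF x1 hg hv, of L]
  note c0 = covd_eq[where \<gamma>=\<gamma> and \<gamma>'=\<gamma>' and t=t, OF x1 L hv]
  note c1 = covd_eq[where \<gamma>=\<gamma> and \<gamma>'=\<gamma>' and t=t, OF x1 L P(1)]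
  note c2 = covd_eq[where \<gamma>=\<gamma> and \<gamma>'=\<gamma>' and t=t, OF x1 L P(2)[OF L]]
  show ?thesis
    unfolding frame_coords_def nabla1a_def c0 c1 c2 P1_eq[OF x0[unfolded x_def]] P1perp_eq[OF x0[unfolded x_def] L]
    using x0 L by (simp add: vec_eq_iff forall_3 x_def v_def omegaf_def omegaf_rate_def field_simps power2_eq_square)
qed

text \<open>The coefficients of sqrt L (a . (b x m)) as a polynomial in L.\<close>

definition kcoeff2 :: "real \<Rightarrow> real^3 \<Rightarrow> real^3 \<Rightarrow> real \<Rightarrow> real \<Rightarrow> real" where
  "kcoeff2 \<alpha> x v p q = - ((omegaf x v)^2 *
     (p * ((2 - \<alpha>) * v$1 / (2 * x$1)) + q * ((1 - \<alpha>) * v$2 / x$1 + \<alpha> * v$3 / 2)))"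

definition kcoeff1 :: "real \<Rightarrow> real^3 \<Rightarrow> real^3 \<Rightarrow> real^3 \<Rightarrow> real \<Rightarrow> real \<Rightarrow> real \<Rightarrow> real" where
  "kcoeff1 \<alpha> x v w p q c =
    (let b1 = v$1 / x$1; b2 = v$3; \<omega> = omegaf x v
     in c * \<omega> * ((1 - \<alpha>/2) * (b1^2 + b2^2) + (1 - \<alpha>) * \<omega> * b2)
        + \<omega> * (w$3 * p - (w$1 / x$1 - b1^2) * q)
        + (omegaf_rate x v w - (1 - \<alpha>) * b1 * \<omega>) * (b1 * q - b2 * p))"

definition kcoeff0 :: "real^3 \<Rightarrow> real^3 \<Rightarrow> real^3 \<Rightarrow> real \<Rightarrow> real" where
  "kcoeff0 x v w c = c * ((w$1 / x$1 - (v$1 / x$1)^2) * v$3 - w$3 * v$1 / x$1)"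

lemma kcoeffs_omegaf_zero:
  assumes "omegaf x v = 0"
  shows "kcoeff2 \<alpha> x v p q = 0" "kcoeff1 \<alpha> x v w p q c = omegaf_rate x v w * (v$1 / x$1 * q - v$3 * p)"
  using assms by (simp_all add: kcoeff2_def kcoeff1_def Let_def)

definition kmodel :: "real \<Rightarrow> real \<Rightarrow> real \<Rightarrow> real \<Rightarrow> real \<Rightarrow> real \<Rightarrow> real \<Rightarrow> real \<Rightarrow> real" where
  "kmodel c2 c1 c0 M C B W L = sqrt ((c2 * L^2 + c1 * L + c0)^2 / ((M * L + C) * (B + W * L)^3))"

lemma scaled_triple_product:
  assumes "s > 0"
  shows "s * (vector [A1, A2, s * E] \<bullet> (vector [b1, b2, s * \<omega>] \<times> vector [p, q, c / s]))
       = A1 * (b2 * c - s^2 * \<omega> * q) + A2 * (s^2 * \<omega> * p - b1 * c) + s^2 * E * (b1 * q - b2 * p)"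
  using assms by (simp add: cross3_def inner_vec_def sum_3 field_simps power2_eq_square)

lemma kgeo_eq_kmodel:
  fixes \<alpha> :: real
  assumes x1: "\<gamma> t $ 1 > 0" and L: "L > 0"
    and hg: "(\<gamma> has_vector_derivative \<gamma>' t) (at t)" and hv: "(\<gamma>' has_vector_derivative w) (at t)"
    and du: "u differentiable (at (\<gamma> t))" and tangent: "egrad u (\<gamma> t) \<bullet> \<gamma>' t = 0"
    and noncharacteristic: "(Xu X1f u (\<gamma> t), Xu X2f u (\<gamma> t)) \<noteq> (0, 0)" and regular: "\<gamma>' t \<noteq> 0"
  defines "x \<equiv> \<gamma> t" and "v \<equiv> \<gamma>' t"
    and "p \<equiv> Xu X1f u (\<gamma> t)" and "q \<equiv> Xu X2f u (\<gamma> t)" and "c \<equiv> Xu X3f u (\<gamma> t)"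
  shows "kgeo L \<alpha> u \<gamma> \<gamma>' t = kmodel (kcoeff2 \<alpha> x v p q) (kcoeff1 \<alpha> x v w p q c) (kcoeff0 x v w c)
           (p^2 + q^2) (c^2) ((v$1 / x$1)^2 + (v$3)^2) ((omegaf x v)^2) L"
proof -
  define s where "s = sqrt L"
  have s: "s > 0" "s^2 = L"
    using L by (simp_all add: s_def)
  have pqc: "p = x$1 * egrad u x $ 1" "q = x$1 * egrad u x $ 2 + egrad u x $ 3" "c = x$1 * egrad u x $ 2"
    using Xu_egrad[OF du] by (simp_all add: p_def q_def c_def x_def)
  have grad_nz: "egrad u (\<gamma> t) \<noteq> 0"
    using noncharacteristic Xu_egrad[OF du] by auto
  define a where "a = frame_coords L x (nabla1a L \<alpha> \<gamma> \<gamma>' t)"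
  define b where "b = frame_coords L x v"
  define m where "m = frame_coords L x (ggrad L u x)"
  have a: "a = vector [
      w$1 / x$1 - (v$1 / x$1)^2 + (1 - \<alpha>/2) * L * v$3 * omegaf x v + (1 - \<alpha>) * L * (omegaf x v)^2,
      w$3 - (1 - \<alpha>/2) * L * (v$1 / x$1) * omegaf x v,
      s * (omegaf_rate x v w - (1 - \<alpha>) * (v$1 / x$1) * omegaf x v)]"
    unfolding a_def s_def x_def v_def by (rule frame_coords_nabla1a[OF x1 L hg hv])
  have b: "b = vector [v$1 / x$1, v$3, s * omegaf x v]"
    by (simp add: b_def frame_coords_def s_def)
  have m: "m = vector [p, q, c / s]"
    using frame_coords_ggrad[of x L u] x1 L by (simp add: m_def x_def pqc s_def)
  have triple: "s * (a \<bullet> (b \<times> m)) = kcoeff2 \<alpha> x v p q * L^2 + kcoeff1 \<alpha> x v w p q c * L + kcoeff0 x v w c"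
    unfolding a b m scaled_triple_product[OF s(1)] s(2) using x1
    by (simp add: x_def kcoeff2_def kcoeff1_def kcoeff0_def Let_def omegaf_def omegaf_rate_def field_simps power2_eq_square)
  have mm: "m \<bullet> m = ((p^2 + q^2) * L + c^2) / L"
    using s L by (simp add: m inner_vec_def sum_3 field_simps power2_eq_square)
  have bb: "b \<bullet> b = (v$1 / x$1)^2 + (v$3)^2 + (omegaf x v)^2 * L"
    using s by (simp add: b inner_vec_def sum_3 power2_eq_square algebra_simps)
  have "kgeo L \<alpha> u \<gamma> \<gamma>' t = sqrt ((a \<bullet> (b \<times> m))^2 / ((m \<bullet> m) * (b \<bullet> b)^3))"
    using kgeo_eq_triple_product[where \<gamma>=\<gamma> and \<gamma>'=\<gamma>' and t=t and u=u, OF x1 L tangent grad_nz regular]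
    by (simp add: a_def b_def m_def x_def v_def)
  also have "(a \<bullet> (b \<times> m))^2 = (s * (a \<bullet> (b \<times> m)))^2 / L"
    using s L by (simp add: power_mult_distrib)
  finally show ?thesis
    unfolding triple mm bb kmodel_def using L by simp
qed

section \<open>Limits as L tends to infinity\<close>

lemma divide_cancel_common: "(k::real) \<noteq> 0 \<Longrightarrow> (a / k) / (b / k) = a / b"
  by (cases "b = 0") (auto simp: field_simps)

lemma kmodel_rescaled:
  assumes "L > 0"
  shows "kmodel c2 c1 c0 M C B W L
       = sqrt ((c2 + c1 / L + c0 / L^2)^2 / ((M + C / L) * (B / L + W)^3))"
proof -
  have "(c2 + c1 / L + c0 / L^2)^2 = (c2 * L^2 + c1 * L + c0)^2 / L^4"
    "(M + C / L) * (B / L + W)^3 = ((M * L + C) * (B + W * L)^3) / L^4"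
    using assms by (simp_all add: field_simps power2_eq_square power3_eq_cube power4_eq_xxxx)
  then show ?thesis
    using assms by (simp add: kmodel_def divide_cancel_common)
qed

lemma tendsto_kmodel:
  assumes "M > 0" "W > 0"
  shows "(kmodel c2 c1 c0 M C B W \<longlongrightarrow> sqrt (c2^2 / (M * W^3))) at_top"
proof -
  have inv: "((\<lambda>L::real. K / L) \<longlongrightarrow> 0) at_top" "((\<lambda>L::real. K / L^2) \<longlongrightarrow> 0) at_top" for K
    by real_asymp+
  have "((\<lambda>L. sqrt ((c2 + c1 / L + c0 / L^2)^2 / ((M + C / L) * (B / L + W)^3)))
          \<longlongrightarrow> sqrt ((c2 + 0 + 0)^2 / ((M + 0) * (0 + W)^3))) at_top"
    using assms by (intro tendsto_intros inv) auto
  moreover have "\<forall>\<^sub>F L in at_top. sqrt ((c2 + c1 / L + c0 / L^2)^2 / ((M + C / L) * (B / L + W)^3))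
                                  = kmodel c2 c1 c0 M C B W L"
    using eventually_gt_at_top[of 0] by (rule eventually_mono) (simp add: kmodel_rescaled)
  ultimately show ?thesis
    using Lim_transform_eventually by fastforce
qed

lemma tendsto_kmodel_zero:
  assumes "M > 0" "B > 0"
  shows "(kmodel 0 0 c0 M C B 0 \<longlongrightarrow> 0) at_top"
proof -
  have inv: "((\<lambda>L::real. K / L) \<longlongrightarrow> 0) at_top" for K
    by real_asymp
  have "((\<lambda>L. sqrt ((c0^2 / L) / ((M + C / L) * B^3))) \<longlongrightarrow> sqrt (0 / ((M + 0) * B^3))) at_top"
    using assms by (intro tendsto_intros inv) auto
  moreover have "\<forall>\<^sub>F L in at_top. sqrt ((c0^2 / L) / ((M + C / L) * B^3)) = kmodel 0 0 c0 M C B 0 L"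
    using eventually_gt_at_top[of 0] by (rule eventually_mono) (simp add: kmodel_def field_simps power2_eq_square)
  ultimately show ?thesis
    using Lim_transform_eventually by fastforce
qed

lemma tendsto_kmodel_div_sqrt:
  assumes "M > 0" "B > 0"
  shows "((\<lambda>L. kmodel 0 c1 c0 M C B 0 L / sqrt L) \<longlongrightarrow> sqrt (c1^2 / (M * B^3))) at_top"
proof -
  have inv: "((\<lambda>L::real. K / L) \<longlongrightarrow> 0) at_top" for K
    by real_asymp
  have "((\<lambda>L. sqrt ((c1 + c0 / L)^2 / ((M + C / L) * B^3))) \<longlongrightarrow> sqrt ((c1 + 0)^2 / ((M + 0) * B^3))) at_top"
    using assms by (intro tendsto_intros inv) auto
  moreover have "\<forall>\<^sub>F L in at_top. sqrt ((c1 + c0 / L)^2 / ((M + C / L) * B^3)) = kmodel 0 c1 c0 M C B 0 L / sqrt L"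
    using eventually_gt_at_top[of 0]
  proof (rule eventually_mono)
    fix L :: real
    assume L: "L > 0"
    have "(c1 + c0 / L)^2 = ((c1 * L + c0)^2 / L) / L" "(M + C / L) * B^3 = ((M * L + C) * B^3) / L"
      using L by (simp_all add: field_simps power2_eq_square)
    then have "(c1 + c0 / L)^2 / ((M + C / L) * B^3) = ((c1 * L + c0)^2 / ((M * L + C) * B^3)) / L"
      using L by (simp add: divide_cancel_common)
    then show "sqrt ((c1 + c0 / L)^2 / ((M + C / L) * B^3)) = kmodel 0 c1 c0 M C B 0 L / sqrt L"
      by (simp add: kmodel_def real_sqrt_divide real_sqrt_mult)
  qed
  ultimately show ?thesis
    using Lim_transform_eventually by fastforce
qed

context
  fixes u :: "real^3 \<Rightarrow> real" and \<gamma> \<gamma>' :: "real \<Rightarrow> real^3" and w :: "real^3" and t :: real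
  assumes pos: "\<gamma> t $ 1 > 0"
    and hg: "(\<gamma> has_vector_derivative \<gamma>' t) (at t)" and hv: "(\<gamma>' has_vector_derivative w) (at t)"
    and du: "u differentiable (at (\<gamma> t))" and tangent: "egrad u (\<gamma> t) \<bullet> \<gamma>' t = 0"
    and noncharacteristic: "(Xu X1f u (\<gamma> t), Xu X2f u (\<gamma> t)) \<noteq> (0, 0)" and regular: "\<gamma>' t \<noteq> 0"
begin

lemma kgeo_eventually_eq_kmodel:
  fixes \<alpha> :: real
  defines "x \<equiv> \<gamma> t" and "v \<equiv> \<gamma>' t"
    and "p \<equiv> Xu X1f u (\<gamma> t)" and "q \<equiv> Xu X2f u (\<gamma> t)" and "c \<equiv> Xu X3f u (\<gamma> t)"
  shows "\<forall>\<^sub>F L in at_top. kmodel (kcoeff2 \<alpha> x v p q) (kcoeff1 \<alpha> x v w p q c) (kcoeff0 x v w c)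
           (p^2 + q^2) (c^2) ((v$1 / x$1)^2 + (v$3)^2) ((omegaf x v)^2) L = kgeo L \<alpha> u \<gamma> \<gamma>' t"
  using eventually_gt_at_top[of 0]
  by (rule eventually_mono)
     (simp add: kgeo_eq_kmodel[where \<gamma>=\<gamma> and \<gamma>'=\<gamma>' and t=t and u=u, OF pos _ hg hv du tangent noncharacteristic regular]
        x_def v_def p_def q_def c_def)

lemma horizontal_gradient_pos: "(Xu X1f u (\<gamma> t))^2 + (Xu X2f u (\<gamma> t))^2 > 0"
  using noncharacteristic by (auto simp: sum_power2_gt_zero_iff)

lemma kgeo_tendsto_omegaf_nonzero:
  assumes omega: "omegaf (\<gamma> t) (\<gamma>' t) \<noteq> 0"
  shows "((\<lambda>L. kgeo L \<alpha> u \<gamma> \<gamma>' t) \<longlongrightarrow>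
           \<bar>pbar u (\<gamma> t) * ((2 - \<alpha>) * (\<gamma>' t)$1 / (2 * (\<gamma> t)$1))
            + qbar u (\<gamma> t) * ((1 - \<alpha>) * (\<gamma>' t)$2 / (\<gamma> t)$1 + \<alpha> * (\<gamma>' t)$3 / 2)\<bar>
           / \<bar>omegaf (\<gamma> t) (\<gamma>' t)\<bar>) at_top"
proof -
  define x v p q where "x = \<gamma> t" and "v = \<gamma>' t" and "p = Xu X1f u (\<gamma> t)" and "q = Xu X2f u (\<gamma> t)"
  define M where "M = p^2 + q^2"
  define Z where "Z = p * ((2 - \<alpha>) * v$1 / (2 * x$1)) + q * ((1 - \<alpha>) * v$2 / x$1 + \<alpha> * v$3 / 2)"
  have M: "M > 0"
    using horizontal_gradient_pos by (simp add: M_def p_def q_def)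
  have W: "(omegaf x v)^2 > 0"
    using omega by (simp add: x_def v_def)
  have "sqrt ((kcoeff2 \<alpha> x v p q)^2 / (M * ((omegaf x v)^2)^3)) = \<bar>Z / sqrt M\<bar> / \<bar>omegaf x v\<bar>"
  proof -
    define \<omega> where "\<omega> = omegaf x v"
    have "kcoeff2 \<alpha> x v p q = - (\<omega>^2 * Z)"
      by (simp add: kcoeff2_def Z_def \<omega>_def)
    moreover have "\<omega> \<noteq> 0"
      using omega by (simp add: \<omega>_def x_def v_def)
    ultimately have "(kcoeff2 \<alpha> x v p q)^2 / (M * ((omegaf x v)^2)^3) = (Z / sqrt M / omegaf x v)^2"
      using M by (simp add: \<omega>_def[symmetric] field_simps power2_eq_square power3_eq_cube)
    then show ?thesis
      by (simp add: abs_mult)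
  qed
  also have "Z / sqrt M = pbar u x * ((2 - \<alpha>) * v$1 / (2 * x$1)) + qbar u x * ((1 - \<alpha>) * v$2 / x$1 + \<alpha> * v$3 / 2)"
    by (simp add: Z_def M_def pbar_def qbar_def p_def q_def x_def add_divide_distrib)
  finally show ?thesis
    using Lim_transform_eventually[OF tendsto_kmodel[OF M W]
        kgeo_eventually_eq_kmodel[of \<alpha>, folded p_def q_def, folded x_def v_def M_def]]
    by (simp add: x_def v_def)
qed

lemma horizontal_velocity_pos:
  assumes "omegaf (\<gamma> t) (\<gamma>' t) = 0"
  shows "(\<gamma>' t $ 1 / \<gamma> t $ 1)^2 + (\<gamma>' t $ 3)^2 > 0"
proof (rule ccontr)
  assume "\<not> ?thesis"
  then have "\<gamma>' t $ 1 = 0" "\<gamma>' t $ 3 = 0"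
    using pos by (auto simp: sum_power2_gt_zero_iff)
  then have "\<gamma>' t = 0"
    using assms pos by (simp add: vec_eq_iff forall_3 omegaf_def)
  then show False
    using regular by simp
qed

lemma deriv_omegaf_curve: "deriv (\<lambda>s. omegaf (\<gamma> s) (\<gamma>' s)) t = omegaf_rate (\<gamma> t) (\<gamma>' t) w"
  by (rule DERIV_imp_deriv[OF has_real_derivative_omegaf_curve[OF pos hg hv]])

lemma kgeo_tendsto_zero_omegaf_stationary:
  assumes omega: "omegaf (\<gamma> t) (\<gamma>' t) = 0" and stationary: "deriv (\<lambda>s. omegaf (\<gamma> s) (\<gamma>' s)) t = 0"
  shows "((\<lambda>L. kgeo L \<alpha> u \<gamma> \<gamma>' t) \<longlongrightarrow> 0) at_top"
proof -
  have "omegaf_rate (\<gamma> t) (\<gamma>' t) w = 0"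
    using stationary by (simp add: deriv_omegaf_curve)
  then have "\<forall>\<^sub>F L in at_top. kmodel 0 0 (kcoeff0 (\<gamma> t) (\<gamma>' t) w (Xu X3f u (\<gamma> t)))
      ((Xu X1f u (\<gamma> t))^2 + (Xu X2f u (\<gamma> t))^2) ((Xu X3f u (\<gamma> t))^2)
      ((\<gamma>' t $ 1 / \<gamma> t $ 1)^2 + (\<gamma>' t $ 3)^2) 0 L = kgeo L \<alpha> u \<gamma> \<gamma>' t"
    using kgeo_eventually_eq_kmodel[of \<alpha>] by (simp add: omega kcoeffs_omegaf_zero)
  then show ?thesis
    by (rule Lim_transform_eventually[OF tendsto_kmodel_zero[OF horizontal_gradient_pos horizontal_velocity_pos[OF omega]]])
qed

lemma kgeo_div_sqrt_tendsto_omegaf_zero: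
  assumes omega: "omegaf (\<gamma> t) (\<gamma>' t) = 0"
  shows "((\<lambda>L. kgeo L \<alpha> u \<gamma> \<gamma>' t / sqrt L) \<longlongrightarrow>
           \<bar>deriv (\<lambda>s. omegaf (\<gamma> s) (\<gamma>' s)) t\<bar>
           / (qbar u (\<gamma> t) * (\<gamma>' t)$1 / (\<gamma> t)$1 - pbar u (\<gamma> t) * (\<gamma>' t)$3)^2) at_top"
proof -
  define x v p q c where "x = \<gamma> t" and "v = \<gamma>' t"
    and "p = Xu X1f u (\<gamma> t)" and "q = Xu X2f u (\<gamma> t)" and "c = Xu X3f u (\<gamma> t)"
  define M B K where "M = p^2 + q^2" and "B = (v$1 / x$1)^2 + (v$3)^2" and "K = v$1 / x$1 * q - v$3 * p"
  have M: "M > 0"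
    using horizontal_gradient_pos by (simp add: M_def p_def q_def)
  have B: "B > 0"
    using horizontal_velocity_pos[OF omega] by (simp add: B_def x_def v_def)
  have "p * (v$1 / x$1) + q * v$3 = 0"
    using egrad_inner_eq_Xu[OF du, of v] tangent pos omega by (simp add: x_def v_def p_def q_def)
  moreover have "K^2 + (p * (v$1 / x$1) + q * v$3)^2 = M * B"
    by (simp add: K_def M_def B_def power2_eq_square algebra_simps add_divide_distrib)
  ultimately have KMB: "K^2 = M * B"
    by simp
  have "qbar u x * v$1 / x$1 - pbar u x * v$3 = K / sqrt M"
    by (simp add: pbar_def qbar_def p_def q_def x_def M_def K_def diff_divide_distrib ac_simps)
  then have denominator: "(qbar u x * v$1 / x$1 - pbar u x * v$3)^2 = B"
    using KMB M by (simp add: power_divide)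
  have limit_value: "sqrt ((omegaf_rate x v w * K)^2 / (M * B^3)) = \<bar>omegaf_rate x v w\<bar> / B"
    using KMB M B by (simp add: power_mult_distrib power3_eq_cube real_sqrt_divide real_sqrt_mult)
  have "\<forall>\<^sub>F L in at_top.
      kmodel 0 (omegaf_rate x v w * K) (kcoeff0 x v w c) M (c^2) B 0 L / sqrt L = kgeo L \<alpha> u \<gamma> \<gamma>' t / sqrt L"
    using kgeo_eventually_eq_kmodel[of \<alpha>]
    by (auto simp: omega kcoeffs_omegaf_zero x_def v_def p_def q_def c_def M_def B_def K_def elim: eventually_mono)
  from Lim_transform_eventually[OF tendsto_kmodel_div_sqrt[OF M B] this]
  have "((\<lambda>L. kgeo L \<alpha> u \<gamma> \<gamma>' t / sqrt L) \<longlongrightarrow> \<bar>omegaf_rate x v w\<bar> / B) at_top"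
    unfolding limit_value .
  then show ?thesis
    unfolding deriv_omegaf_curve denominator[unfolded x_def v_def] by (simp add: x_def v_def)
qed

end

theorem lemma2p11:
  fixes u :: "real^3 \<Rightarrow> real" and Du :: "real^3 \<Rightarrow> real^3 \<Rightarrow> real"
    and D2u :: "3 \<Rightarrow> real^3 \<Rightarrow> real^3 \<Rightarrow> real"
    and U Sigma :: "(real^3) set"
    and \<gamma> \<gamma>' \<gamma>'' :: "real \<Rightarrow> real^3" and S :: "real set" and a b \<alpha> :: real
  assumes U_open: "open U" and U_M: "U \<subseteq> {x. x$1 > 0}"
    and u_D: "\<forall>x\<in>U. (u has_derivative Du x) (at x)"
    and u_D2: "\<forall>i. \<forall>x\<in>U. ((\<lambda>y. Du y (axis i 1)) has_derivative D2u i x) (at x)"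
    and u_D2_cont: "\<forall>i j. continuous_on U (\<lambda>x. D2u i x (axis j 1))"
    and Sigma_def: "Sigma = {x\<in>U. u x = 0}"
    and Sigma_compact: "compact Sigma"
    and grad_nz: "\<forall>x\<in>Sigma. Du x \<noteq> (\<lambda>v. 0)"
    and ab: "a < b" and S_open: "open S" and S_ab: "{a..b} \<subseteq> S"
    and \<gamma>_D: "\<forall>s\<in>S. (\<gamma> has_vector_derivative \<gamma>' s) (at s)"
    and \<gamma>_D2: "\<forall>s\<in>S. (\<gamma>' has_vector_derivative \<gamma>'' s) (at s)"
    and \<gamma>_C2: "continuous_on S \<gamma>''"
    and \<gamma>_Sigma: "\<forall>t\<in>{a..b}. \<gamma> t \<in> Sigma"
    and \<gamma>_regular: "\<forall>t\<in>{a..b}. \<gamma>' t \<noteq> 0"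
    and noncharacteristic: "\<forall>t\<in>{a..b}. (Xu X1f u (\<gamma> t), Xu X2f u (\<gamma> t)) \<noteq> (0, 0)"
  shows "\<forall>t\<in>{a..b}.
     (omegaf (\<gamma> t) (\<gamma>' t) \<noteq> 0 \<longrightarrow>
        ((\<lambda>L. kgeo L \<alpha> u \<gamma> \<gamma>' t) \<longlongrightarrow>
           \<bar>pbar u (\<gamma> t) * ((2 - \<alpha>) * (\<gamma>' t)$1 / (2 * (\<gamma> t)$1))
            + qbar u (\<gamma> t) * ((1 - \<alpha>) * (\<gamma>' t)$2 / (\<gamma> t)$1 + \<alpha> * (\<gamma>' t)$3 / 2)\<bar>
           / \<bar>omegaf (\<gamma> t) (\<gamma>' t)\<bar>) at_top)
   \<and> (omegaf (\<gamma> t) (\<gamma>' t) = 0 \<and> deriv (\<lambda>s. omegaf (\<gamma> s) (\<gamma>' s)) t = 0 \<longrightarrow>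
        ((\<lambda>L. kgeo L \<alpha> u \<gamma> \<gamma>' t) \<longlongrightarrow> 0) at_top)
   \<and> (omegaf (\<gamma> t) (\<gamma>' t) = 0 \<and> deriv (\<lambda>s. omegaf (\<gamma> s) (\<gamma>' s)) t \<noteq> 0 \<longrightarrow>
        ((\<lambda>L. kgeo L \<alpha> u \<gamma> \<gamma>' t / sqrt L) \<longlongrightarrow>
           \<bar>deriv (\<lambda>s. omegaf (\<gamma> s) (\<gamma>' s)) t\<bar>
           / (qbar u (\<gamma> t) * (\<gamma>' t)$1 / (\<gamma> t)$1 - pbar u (\<gamma> t) * (\<gamma>' t)$3)^2) at_top)"
  \<comment> \<open>The statement is pointwise in t and needs only Du and the second derivative of gamma at t.\<close>
  apply (intro ballI)
  subgoal premises t_ab for t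
  proof -
    have "\<gamma> t \<in> U" "t \<in> S"
      using \<gamma>_Sigma t_ab S_ab by (auto simp: Sigma_def)
    then have pos: "\<gamma> t $ 1 > 0" and du: "(u has_derivative Du (\<gamma> t)) (at (\<gamma> t))"
      and hg: "(\<gamma> has_vector_derivative \<gamma>' t) (at t)" and hv: "(\<gamma>' has_vector_derivative \<gamma>'' t) (at t)"
      using U_M u_D \<gamma>_D \<gamma>_D2 by auto
    have "Du (\<gamma> t) (\<gamma>' t) = 0"
      using derivative_along_level_curve[OF hg du _ ab t_ab] \<gamma>_Sigma by (simp add: Sigma_def)
    then have tangent: "egrad u (\<gamma> t) \<bullet> \<gamma>' t = 0"
      by (simp add: has_derivative_eq_egrad_inner[OF du])
    note at_t = pos hg hv differentiableI[OF du] tangent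
      noncharacteristic[rule_format, OF t_ab] \<gamma>_regular[rule_format, OF t_ab]
    show ?thesis
      using kgeo_tendsto_omegaf_nonzero[where \<gamma>=\<gamma> and \<gamma>'=\<gamma>' and t=t and u=u, OF at_t]
        kgeo_tendsto_zero_omegaf_stationary[where \<gamma>=\<gamma> and \<gamma>'=\<gamma>' and t=t and u=u, OF at_t]
        kgeo_div_sqrt_tendsto_omegaf_zero[where \<gamma>=\<gamma> and \<gamma>'=\<gamma>' and t=t and u=u, OF at_t]
      by blast
  qed
  done

end
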